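(* Let $X_1,X_2,\ldots$ be i.i.d. random variables with $\mathbb E X_k=0$, $\operatorname{Var}X_k=1$, such that $\varphi(t)=\log\mathbb Ee^{tX_1}$ is finite on $[0,t_0)$ for some $t_0>0$. Assume that for some $\alpha<2$ we have $\mathbb P[X_1>x]>e^{-x^\alpha}$ for all sufficiently large $x$. Then for every $a>0$, $$\lim_{n\to\infty}\mathbb P[\mathbf M_n=\mathbf M_n(1,a\log n)]=1.$$
   Context: $S_0=0$, $S_k=X_1+\cdots+X_k$, $\mathbf M_n=\max_{0\leq i<j\leq n}\frac{S_j-S_i}{\sqrt{j-i}}$, and for $0\leq h_1<h_2$, $\mathbf M_n(h_1,h_2)$ is the same maximum restricted to pairs with $h_1\leq j-i\leq h_2$. *)

theory Defs
  imports "HOL-Probability.Probability"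
begin

definition psum :: "(nat \<Rightarrow> real) \<Rightarrow> nat \<Rightarrow> real" where
  "psum x k = (\<Sum>i\<in>{1..k}. x i)"

definition Mn :: "(nat \<Rightarrow> real) \<Rightarrow> nat \<Rightarrow> real" where
  "Mn s n = Max {(s j - s i) / sqrt (real (j - i)) | i j. i < j \<and> j \<le> n}"

definition Mn_restr :: "(nat \<Rightarrow> real) \<Rightarrow> nat \<Rightarrow> real \<Rightarrow> real \<Rightarrow> real" where
  "Mn_restr s n h1 h2 = Max {(s j - s i) / sqrt (real (j - i)) | i j.
      i < j \<and> j \<le> n \<and> h1 \<le> real (j - i) \<and> real (j - i) \<le> h2}"

end

theory Submission
  imports Defs "HOL-Real_Asymp.Real_Asymp"
begin

text \<open>
  Fix the level \<open>y = (ln n / 2) powr \<gamma>\<close> with \<open>1/2 < \<gamma>\<close> and \<open>\<alpha> * \<gamma> \<le> 1\<close>. The tail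
  assumption gives \<open>P[X\<^sub>1 > y] \<ge> n powr (-1/2)\<close>, so with probability at least
  \<open>1 - exp (- sqrt n)\<close> some single step \<open>X\<^sub>k\<close> exceeds \<open>y\<close>. Near \<open>0\<close> the moment generating
  function satisfies \<open>E exp (t X\<^sub>1) \<le> exp (K t\<^sup>2)\<close>, so by the Chernoff bound every window of
  length \<open>m > a ln n\<close> has \<open>P[(S\<^sub>j - S\<^sub>i) / sqrt m > y] \<le> n powr (-3)\<close>, and there are at most
  \<open>(n + 1)\<^sup>2\<close> windows. Outside these two exceptional events the window \<open>(k - 1, k)\<close> beats every
  long window, so the maximum defining \<open>M\<^sub>n\<close> is attained on a window of length at most \<open>a ln n\<close>.
\<close>

lemma exp_le_quadratic_if_nonpos:
  fixes x :: real
  assumes "x \<le> 0"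
  shows "exp x \<le> 1 + x + x\<^sup>2 / 2"
proof -
  obtain s where "exp x = (\<Sum>m<3. x ^ m / fact m) + exp s / fact 3 * x ^ 3"
    using Maclaurin_exp_le by blast
  moreover have "x ^ 3 \<le> 0"
    using assms by (simp add: power3_eq_cube mult_nonneg_nonpos zero_le_mult_iff)
  ultimately show ?thesis
    by (simp add: eval_nat_numeral mult_nonneg_nonpos)
qed

lemma exp_le_quadratic_if_nonneg:
  fixes x w :: real
  assumes "0 \<le> x" "x \<le> w"
  shows "exp x \<le> 1 + x + x\<^sup>2 / 2 * exp w"
proof -
  obtain s where s: "\<bar>s\<bar> \<le> \<bar>x\<bar>" "exp x = (\<Sum>m<2. x ^ m / fact m) + exp s / fact 2 * x ^ 2"
    using Maclaurin_exp_le by blast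
  have "exp s \<le> exp w" using s(1) assms by simp
  then have "exp s * x\<^sup>2 \<le> exp w * x\<^sup>2" by (rule mult_right_mono) simp
  then show ?thesis using s(2) by (simp add: eval_nat_numeral mult.commute)
qed

lemma exp_mult_le_quadratic:
  fixes t t1 x :: real
  assumes "0 < t1" "0 \<le> t" "t \<le> t1"
  shows "exp (t * x) \<le> 1 + t * x + t\<^sup>2 * (x\<^sup>2 / 2 + exp (2 * t1 * x) / t1\<^sup>2)"
proof (cases "x \<le> 0")
  case True
  then have "exp (t * x) \<le> 1 + t * x + t\<^sup>2 * (x\<^sup>2 / 2)"
    using exp_le_quadratic_if_nonpos[of "t * x"] assms
    by (simp add: mult_nonneg_nonpos power_mult_distrib)
  moreover have "0 \<le> t\<^sup>2 * (exp (2 * t1 * x) / t1\<^sup>2)" by simp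
  ultimately show ?thesis unfolding distrib_left by linarith
next
  case False
  have "x\<^sup>2 / 2 * exp (t1 * x) \<le> exp (2 * t1 * x) / t1\<^sup>2"
  proof -
    have "0 \<le> t1 * x" using assms False by simp
    then have "(t1 * x)\<^sup>2 / 2 \<le> exp (t1 * x)"
      using exp_lower_Taylor_quadratic[of "t1 * x"] by linarith
    then have "x\<^sup>2 / 2 * exp (t1 * x) \<le> exp (t1 * x) / t1\<^sup>2 * exp (t1 * x)"
      using assms by (intro mult_right_mono) (auto simp: field_simps power_mult_distrib)
    also have "\<dots> = exp (2 * t1 * x) / t1\<^sup>2"
      by (simp add: mult_exp_exp)
    finally show ?thesis .
  qed
  then have "x\<^sup>2 / 2 * exp (t1 * x) \<le> x\<^sup>2 / 2 + exp (2 * t1 * x) / t1\<^sup>2"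
    by (simp add: add_increasing)
  have "exp (t * x) \<le> 1 + t * x + t\<^sup>2 * (x\<^sup>2 / 2 * exp (t1 * x))"
    using exp_le_quadratic_if_nonneg[of "t * x" "t1 * x"] assms False
    by (simp add: mult_right_mono power_mult_distrib mult_ac)
  also have "\<dots> \<le> 1 + t * x + t\<^sup>2 * (x\<^sup>2 / 2 + exp (2 * t1 * x) / t1\<^sup>2)"
    using \<open>x\<^sup>2 / 2 * exp (t1 * x) \<le> x\<^sup>2 / 2 + exp (2 * t1 * x) / t1\<^sup>2\<close>
    by (intro add_left_mono mult_left_mono) auto
  finally show ?thesis .
qed

lemma chernoff_exponent_bound:
  fixes K t1 y r :: real
  assumes "0 < K" "0 < t1" "0 \<le> y" "0 < r"
  obtains t where "0 \<le> t" "t \<le> t1"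
    "K * t\<^sup>2 * r\<^sup>2 - t * (y * r) \<le> - min (y\<^sup>2 / (4 * K)) (t1 * y * r / 2)"
proof (cases "y / (2 * K * r) \<le> t1")
  \<comment> \<open>the exponent \<open>K t\<^sup>2 r\<^sup>2 - t y r\<close> is minimised at \<open>t = y / (2 K r)\<close>, capped at \<open>t1\<close>\<close>
  case True
  have "K * (y / (2 * K * r))\<^sup>2 * r\<^sup>2 - y / (2 * K * r) * (y * r) = - (y\<^sup>2 / (4 * K))"
    using assms by (simp add: field_simps power2_eq_square)
  then show ?thesis
    using that[of "y / (2 * K * r)"] True assms by simp
next
  case False
  then have "t1 * (2 * K * r) < y"
    using assms by (simp add: not_le pos_less_divide_eq)
  then have "t1 * (2 * K * r) * (t1 * r) \<le> y * (t1 * r)"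
    using assms by (intro mult_right_mono) auto
  then have "K * t1\<^sup>2 * r\<^sup>2 - t1 * (y * r) \<le> - (t1 * y * r / 2)"
    by (simp add: power2_eq_square algebra_simps)
  then show ?thesis
    using that[of t1] assms by simp
qed

lemma powr_powr_le_self:
  fixes u \<gamma> \<alpha> :: real
  assumes "1 \<le> u" "\<alpha> * \<gamma> \<le> 1"
  shows "(u powr \<gamma>) powr \<alpha> \<le> u"
  using powr_mono[OF _ assms(1), of "\<gamma> * \<alpha>" 1] assms by (simp add: powr_powr mult.commute)

lemma mult_exp_neg_half_ln:
  fixes x :: real
  assumes "0 < x"
  shows "x * exp (- (ln x / 2)) = sqrt x"
proof -
  have "exp (ln x / 2) = sqrt x"
    using assms by (simp add: powr_half_sqrt[symmetric] powr_def)
  then show ?thesis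
    using assms by (simp add: exp_minus field_simps real_div_sqrt)
qed

context prob_space
begin

lemma mgf_le_exp_square:
  fixes Y :: "'a \<Rightarrow> real"
  assumes "integrable M Y" "expectation Y = 0" "integrable M (\<lambda>\<omega>. (Y \<omega>)\<^sup>2)" "0 < t0"
    and mgf: "\<And>t. 0 \<le> t \<Longrightarrow> t < t0 \<Longrightarrow> integrable M (\<lambda>\<omega>. exp (t * Y \<omega>))"
  obtains K t1 where "0 < K" "0 < t1" "t1 < t0"
    "\<And>t. 0 \<le> t \<Longrightarrow> t \<le> t1 \<Longrightarrow> expectation (\<lambda>\<omega>. exp (t * Y \<omega>)) \<le> exp (K * t\<^sup>2)"
proof -
  define t1 where "t1 = t0 / 3"
  have t1: "0 < t1" "t1 < t0" "2 * t1 < t0" using \<open>0 < t0\<close> by (auto simp: t1_def)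
  have int_exp: "integrable M (\<lambda>\<omega>. exp (2 * t1 * Y \<omega>))" using mgf t1 by simp
  define K where
    "K = expectation (\<lambda>\<omega>. (Y \<omega>)\<^sup>2) / 2 + expectation (\<lambda>\<omega>. exp (2 * t1 * Y \<omega>)) / t1\<^sup>2 + 1"
  have "0 < K"
    unfolding K_def by (intro add_nonneg_pos add_nonneg_nonneg divide_nonneg_nonneg integral_nonneg_AE) auto
  have "expectation (\<lambda>\<omega>. exp (t * Y \<omega>)) \<le> exp (K * t\<^sup>2)" if t: "0 \<le> t" "t \<le> t1" for t
  proof -
    have "expectation (\<lambda>\<omega>. exp (t * Y \<omega>))
        \<le> expectation (\<lambda>\<omega>. 1 + t * Y \<omega> + t\<^sup>2 * ((Y \<omega>)\<^sup>2 / 2 + exp (2 * t1 * Y \<omega>) / t1\<^sup>2))"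
      using assms int_exp t t1
      by (intro integral_mono exp_mult_le_quadratic[OF t1(1) t]) auto
    also have "\<dots> = 1 + t\<^sup>2 * (K - 1)"
      using assms int_exp by (simp add: K_def prob_space)
    also have "\<dots> \<le> 1 + K * t\<^sup>2"
      by (simp add: algebra_simps)
    also have "\<dots> \<le> exp (K * t\<^sup>2)"
      using exp_ge_add_one_self[of "K * t\<^sup>2"] by simp
    finally show ?thesis .
  qed
  then show ?thesis using that \<open>0 < K\<close> t1 by blast
qed

end

definition norm_incr :: "(nat \<Rightarrow> real) \<Rightarrow> nat \<Rightarrow> nat \<Rightarrow> real" where
  "norm_incr s i j = (s j - s i) / sqrt (real (j - i))"

lemma Mn_eq_Max: "Mn s n = Max ((\<lambda>(i, j). norm_incr s i j) ` {(i, j). i < j \<and> j \<le> n})"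
  unfolding Mn_def norm_incr_def by (rule arg_cong[where f = Max]) auto

lemma Mn_restr_eq_Max:
  "Mn_restr s n h1 h2 = Max ((\<lambda>(i, j). norm_incr s i j) `
     {(i, j). i < j \<and> j \<le> n \<and> h1 \<le> real (j - i) \<and> real (j - i) \<le> h2})"
  unfolding Mn_restr_def norm_incr_def by (rule arg_cong[where f = Max]) auto

lemma windows_subset: "{(i :: nat, j). i < j \<and> j \<le> n \<and> P i j} \<subseteq> {..n} \<times> {..n}"
  by auto

lemma finite_windows: "finite {(i :: nat, j). i < j \<and> j \<le> n \<and> P i j}"
  by (rule finite_subset[OF windows_subset]) simp

lemma card_windows_le: "card {(i :: nat, j). i < j \<and> j \<le> n \<and> P i j} \<le> (n + 1)\<^sup>2"
proof -
  have "card {(i, j). i < j \<and> j \<le> n \<and> P i j} \<le> card ({..n} \<times> {..n})"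
    by (rule card_mono[OF _ windows_subset]) simp
  then show ?thesis by (simp add: card_cartesian_product power2_eq_square)
qed

lemma psum_diff:
  assumes "i \<le> j"
  shows "psum x j - psum x i = (\<Sum>k\<in>{Suc i..j}. x k)"
proof -
  have "{1..j} = {1..i} \<union> {Suc i..j}" using assms by auto
  then show ?thesis unfolding psum_def by (simp add: sum.union_disjoint ivl_disj_int)
qed

lemma Mn_eq_Mn_restr_if_step_dominates:
  fixes s :: "nat \<Rightarrow> real"
  assumes "1 \<le> L" "k \<in> {1..n}" "y < s k - s (k - 1)"
    and long: "\<And>i j. i < j \<Longrightarrow> j \<le> n \<Longrightarrow> L < real (j - i) \<Longrightarrow> norm_incr s i j \<le> y"
  shows "Mn s n = Mn_restr s n 1 L"
proof -
  define f where "f = (\<lambda>(i, j). norm_incr s i j)"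
  define A where "A = {(i, j). i < j \<and> j \<le> n}"
  define B where "B = {(i, j). i < j \<and> j \<le> n \<and> 1 \<le> real (j - i) \<and> real (j - i) \<le> L}"
  have "finite A" unfolding A_def using finite_windows[where P = "\<lambda>_ _. True"] by simp
  moreover have "B \<subseteq> A" by (auto simp: A_def B_def)
  moreover have step: "(k - 1, k) \<in> B" using assms by (auto simp: B_def)
  ultimately have fin: "finite (f ` A)" "finite (f ` B)" and ne: "f ` B \<noteq> {}"
    by (auto intro: finite_subset)
  have "Max (f ` B) \<le> Max (f ` A)"
    using fin ne \<open>B \<subseteq> A\<close> by (intro Max_mono) auto
  moreover have "f p \<le> Max (f ` B)" if "p \<in> A" for p
  proof (cases "p \<in> B")
    case True
    then show ?thesis using fin by simp
  next
    case False
    obtain i j where p: "p = (i, j)" "i < j" "j \<le> n" using \<open>p \<in> A\<close> by (auto simp: A_def)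
    then have "L < real (j - i)" using False by (auto simp: B_def)
    then have "f p \<le> y" using long p by (simp add: f_def)
    also have "y < f (k - 1, k)" using assms by (simp add: f_def norm_incr_def)
    also have "f (k - 1, k) \<le> Max (f ` B)" using fin step by simp
    finally show ?thesis by simp
  qed
  then have "Max (f ` A) \<le> Max (f ` B)"
    using fin ne \<open>B \<subseteq> A\<close> by (intro Max.boundedI) auto
  ultimately show ?thesis
    unfolding Mn_eq_Max Mn_restr_eq_Max f_def A_def B_def by simp
qed

locale iid_sequence = prob_space +
  fixes X :: "nat \<Rightarrow> 'a \<Rightarrow> real"
  assumes random_variable_X: "\<And>i. 1 \<le> i \<Longrightarrow> X i \<in> borel_measurable M"
    and indep_vars_X: "indep_vars (\<lambda>_. borel) X {1..}"
    and distr_X: "\<And>i. 1 \<le> i \<Longrightarrow> distr M borel (X i) = distr M borel (X 1)"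
begin

abbreviation S :: "'a \<Rightarrow> nat \<Rightarrow> real" where
  "S \<omega> \<equiv> psum (\<lambda>k. X k \<omega>)"

lemma integrable_comp_X_iff:
  fixes g :: "real \<Rightarrow> real"
  assumes "1 \<le> i" "g \<in> borel_measurable borel"
  shows "integrable M (\<lambda>\<omega>. g (X i \<omega>)) \<longleftrightarrow> integrable M (\<lambda>\<omega>. g (X 1 \<omega>))"
  using integrable_distr_eq[OF random_variable_X assms(2)] distr_X[OF assms(1)] assms(1)
  by (metis order_refl)

lemma integral_comp_X:
  fixes g :: "real \<Rightarrow> real"
  assumes "1 \<le> i" "g \<in> borel_measurable borel"
  shows "expectation (\<lambda>\<omega>. g (X i \<omega>)) = expectation (\<lambda>\<omega>. g (X 1 \<omega>))"
  using integral_distr[OF random_variable_X assms(2)] distr_X[OF assms(1)] assms(1)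
  by (metis order_refl)

lemma prob_X_vimage:
  assumes "1 \<le> i" "A \<in> sets borel"
  shows "prob (X i -` A \<inter> space M) = prob (X 1 -` A \<inter> space M)"
  using measure_distr[OF random_variable_X[OF assms(1)] assms(2)]
    measure_distr[OF random_variable_X[OF order_refl] assms(2)] distr_X[OF assms(1)]
  by simp

lemma measurable_S [measurable]: "(\<lambda>\<omega>. S \<omega> j) \<in> borel_measurable M"
  unfolding psum_def by (intro borel_measurable_sum random_variable_X) simp

lemma measurable_norm_incr [measurable]: "(\<lambda>\<omega>. norm_incr (S \<omega>) i j) \<in> borel_measurable M"
  unfolding norm_incr_def by measurable

lemma measurable_Mn [measurable]: "(\<lambda>\<omega>. Mn (S \<omega>) n) \<in> borel_measurable M"
  unfolding Mn_eq_Max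
  using finite_windows[where P = "\<lambda>_ _. True"]
  by (intro borel_measurable_Max) (auto simp: split_beta)

lemma measurable_Mn_restr [measurable]: "(\<lambda>\<omega>. Mn_restr (S \<omega>) n h1 h2) \<in> borel_measurable M"
  unfolding Mn_restr_eq_Max by (intro borel_measurable_Max finite_windows) (auto simp: split_beta)

lemma
  assumes "finite I" "I \<subseteq> {1..}" and int: "integrable M (\<lambda>\<omega>. exp (t * X 1 \<omega>))"
  shows integrable_exp_sum_X: "integrable M (\<lambda>\<omega>. exp (t * (\<Sum>k\<in>I. X k \<omega>)))"
    and integral_exp_sum_X:
      "expectation (\<lambda>\<omega>. exp (t * (\<Sum>k\<in>I. X k \<omega>))) = expectation (\<lambda>\<omega>. exp (t * X 1 \<omega>)) ^ card I"
proof -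
  have exp_sum: "exp (t * (\<Sum>k\<in>I. X k \<omega>)) = (\<Prod>k\<in>I. exp (t * X k \<omega>))" for \<omega>
    using \<open>finite I\<close> by (simp add: sum_distrib_left exp_sum)
  have indep: "indep_vars (\<lambda>_. borel) (\<lambda>k \<omega>. exp (t * X k \<omega>)) I"
    by (rule indep_vars_compose2[OF indep_vars_subset[OF indep_vars_X \<open>I \<subseteq> {1..}\<close>]]) auto
  have int_k: "integrable M (\<lambda>\<omega>. exp (t * X k \<omega>))" if "k \<in> I" for k
    using integrable_comp_X_iff[of k "\<lambda>x. exp (t * x)"] that assms by auto
  show "integrable M (\<lambda>\<omega>. exp (t * (\<Sum>k\<in>I. X k \<omega>)))"
    unfolding exp_sum by (rule indep_vars_integrable[OF \<open>finite I\<close> indep int_k])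
  have "expectation (\<lambda>\<omega>. exp (t * (\<Sum>k\<in>I. X k \<omega>))) = (\<Prod>k\<in>I. expectation (\<lambda>\<omega>. exp (t * X k \<omega>)))"
    unfolding exp_sum by (rule indep_vars_lebesgue_integral[OF \<open>finite I\<close> indep int_k])
  also have "\<dots> = (\<Prod>k\<in>I. expectation (\<lambda>\<omega>. exp (t * X 1 \<omega>)))"
    using assms by (intro prod.cong refl integral_comp_X) auto
  finally show "expectation (\<lambda>\<omega>. exp (t * (\<Sum>k\<in>I. X k \<omega>))) = expectation (\<lambda>\<omega>. exp (t * X 1 \<omega>)) ^ card I"
    by simp
qed

lemma prob_sum_X_ge_le:
  assumes "finite I" "I \<subseteq> {1..}" "integrable M (\<lambda>\<omega>. exp (t * X 1 \<omega>))" "0 \<le> t"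
  shows "prob {\<omega> \<in> space M. c \<le> (\<Sum>k\<in>I. X k \<omega>)}
    \<le> exp (- (t * c)) * expectation (\<lambda>\<omega>. exp (t * X 1 \<omega>)) ^ card I"
proof -
  have [measurable]: "X k \<in> borel_measurable M" if "k \<in> I" for k
    using assms that random_variable_X by auto
  let ?u = "\<lambda>\<omega>. exp (t * (\<Sum>k\<in>I. X k \<omega>))"
  have "prob {\<omega> \<in> space M. c \<le> (\<Sum>k\<in>I. X k \<omega>)} \<le> prob {\<omega> \<in> space M. exp (t * c) \<le> ?u \<omega>}"
    using \<open>0 \<le> t\<close> by (intro finite_measure_mono) (auto intro: mult_left_mono)
  also have "\<dots> \<le> expectation ?u / exp (t * c)"
    using integrable_exp_sum_X[OF assms(1-3)] by (intro integral_Markov_inequality_measure) auto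
  also have "\<dots> = exp (- (t * c)) * expectation (\<lambda>\<omega>. exp (t * X 1 \<omega>)) ^ card I"
    using integral_exp_sum_X[OF assms(1-3)] by (simp add: exp_minus field_simps)
  finally show ?thesis .
qed

lemma prob_all_X_le_eq_power:
  assumes "1 \<le> n"
  shows "prob {\<omega> \<in> space M. \<forall>k\<in>{1..n}. X k \<omega> \<le> y} = prob {\<omega> \<in> space M. X 1 \<omega> \<le> y} ^ n"
proof -
  have "{\<omega> \<in> space M. \<forall>k\<in>{1..n}. X k \<omega> \<le> y} = (\<Inter>k\<in>{1..n}. X k -` {..y} \<inter> space M)"
    using assms by auto
  moreover have "prob (\<Inter>k\<in>{1..n}. X k -` {..y} \<inter> space M) = (\<Prod>k\<in>{1..n}. prob (X k -` {..y} \<inter> space M))"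
    using indep_vars_X assms unfolding indep_vars_def
    by (intro indep_setsD) (auto intro!: sigma_sets.Basic exI[of _ "{..y}"])
  moreover have "prob (X k -` {..y} \<inter> space M) = prob {\<omega> \<in> space M. X 1 \<omega> \<le> y}" if "1 \<le> k" for k
    using prob_X_vimage[OF that, of "{..y}"] by (simp add: Int_def conj_commute)
  ultimately show ?thesis by simp
qed

lemma prob_all_X_le_le_exp:
  "prob {\<omega> \<in> space M. \<forall>k\<in>{1..n}. X k \<omega> \<le> y} \<le> exp (- (real n * prob {\<omega> \<in> space M. y < X 1 \<omega>}))"
proof (cases "n = 0")
  case False
  define p where "p = prob {\<omega> \<in> space M. y < X 1 \<omega>}"
  have "prob {\<omega> \<in> space M. X 1 \<omega> \<le> y} = prob (space M - {\<omega> \<in> space M. y < X 1 \<omega>})"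
    by (rule arg_cong[where f = prob]) auto
  also have "\<dots> = 1 - p"
    unfolding p_def using random_variable_X[OF order_refl] by (intro prob_compl) measurable
  finally have "prob {\<omega> \<in> space M. \<forall>k\<in>{1..n}. X k \<omega> \<le> y} = (1 - p) ^ n"
    using prob_all_X_le_eq_power False by simp
  also have "\<dots> \<le> exp (- p) ^ n"
    using exp_ge_add_one_self[of "- p"] by (intro power_mono) (auto simp: p_def)
  finally show ?thesis by (simp add: p_def exp_of_nat_mult[symmetric])
qed simp

lemma prob_norm_incr_gt_le:
  assumes "0 < K" "0 < t1"
    and int: "\<And>t. 0 \<le> t \<Longrightarrow> t \<le> t1 \<Longrightarrow> integrable M (\<lambda>\<omega>. exp (t * X 1 \<omega>))"
    and mgf: "\<And>t. 0 \<le> t \<Longrightarrow> t \<le> t1 \<Longrightarrow> expectation (\<lambda>\<omega>. exp (t * X 1 \<omega>)) \<le> exp (K * t\<^sup>2)"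
    and "i < j" "0 \<le> y"
  shows "prob {\<omega> \<in> space M. y < norm_incr (S \<omega>) i j}
    \<le> exp (- min (y\<^sup>2 / (4 * K)) (t1 * y * sqrt (real (j - i)) / 2))"
proof -
  define r where "r = sqrt (real (j - i))"
  have "0 < r" "r\<^sup>2 = real (j - i)" using \<open>i < j\<close> by (auto simp: r_def)
  obtain t where t: "0 \<le> t" "t \<le> t1"
    and exponent: "K * t\<^sup>2 * r\<^sup>2 - t * (y * r) \<le> - min (y\<^sup>2 / (4 * K)) (t1 * y * r / 2)"
    using chernoff_exponent_bound[OF \<open>0 < K\<close> \<open>0 < t1\<close> \<open>0 \<le> y\<close> \<open>0 < r\<close>] .
  have [measurable]: "X k \<in> borel_measurable M" if "k \<in> {Suc i..j}" for k
    using that random_variable_X by simp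
  have "prob {\<omega> \<in> space M. y < norm_incr (S \<omega>) i j}
      \<le> prob {\<omega> \<in> space M. y * r \<le> (\<Sum>k\<in>{Suc i..j}. X k \<omega>)}"
    using \<open>i < j\<close> \<open>0 < r\<close>
    by (intro finite_measure_mono)
      (auto simp: norm_incr_def psum_diff r_def pos_less_divide_eq less_imp_le)
  also have "\<dots> \<le> exp (- (t * (y * r))) * expectation (\<lambda>\<omega>. exp (t * X 1 \<omega>)) ^ (j - i)"
    using prob_sum_X_ge_le[of "{Suc i..j}" t "y * r"] int t by simp
  also have "\<dots> \<le> exp (- (t * (y * r))) * exp (K * t\<^sup>2) ^ (j - i)"
    using mgf[OF t] by (intro mult_left_mono power_mono integral_nonneg_AE) auto
  also have "\<dots> = exp (K * t\<^sup>2 * r\<^sup>2 - t * (y * r))"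
    using \<open>r\<^sup>2 = real (j - i)\<close> by (simp add: exp_of_nat_mult[symmetric] mult_exp_exp mult_ac)
  also have "\<dots> \<le> exp (- min (y\<^sup>2 / (4 * K)) (t1 * y * r / 2))"
    using exponent by simp
  finally show ?thesis by (simp add: r_def)
qed

lemma sets_norm_incr_gt: "{\<omega> \<in> space M. y < norm_incr (S \<omega>) i j} \<in> events"
  by measurable

lemma prob_some_long_window_gt_le:
  assumes "0 \<le> \<delta>"
    and long: "\<And>i j. i < j \<Longrightarrow> j \<le> n \<Longrightarrow> L < real (j - i) \<Longrightarrow>
      prob {\<omega> \<in> space M. y < norm_incr (S \<omega>) i j} \<le> \<delta>"
  shows "prob (\<Union>(i, j)\<in>{(i, j). i < j \<and> j \<le> n \<and> L < real (j - i)}.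
      {\<omega> \<in> space M. y < norm_incr (S \<omega>) i j}) \<le> (real n + 1)\<^sup>2 * \<delta>"
proof -
  let ?W = "{(i, j). i < j \<and> j \<le> n \<and> L < real (j - i)}"
  let ?A = "\<lambda>(i, j). {\<omega> \<in> space M. y < norm_incr (S \<omega>) i j}"
  have "prob (\<Union>(?A ` ?W)) \<le> (\<Sum>p\<in>?W. prob (?A p))"
    by (rule measure_UNION_le[OF finite_windows]) (clarsimp simp: sets_norm_incr_gt)
  also have "\<dots> \<le> real (card ?W) * \<delta>"
    by (rule sum_bounded_above) (auto intro: long)
  also have "\<dots> \<le> (real n + 1)\<^sup>2 * \<delta>"
  proof -
    have "real (card ?W) \<le> real ((n + 1)\<^sup>2)" using card_windows_le by (simp only: of_nat_le_iff)
    then show ?thesis using \<open>0 \<le> \<delta>\<close> by (intro mult_right_mono) (simp_all add: add.commute)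
  qed
  finally show ?thesis .
qed

lemma prob_Mn_eq_Mn_restr_ge:
  assumes "1 \<le> L" "0 \<le> \<delta>2"
    and no_big_step: "prob {\<omega> \<in> space M. \<forall>k\<in>{1..n}. X k \<omega> \<le> y} \<le> \<delta>1"
    and long: "\<And>i j. i < j \<Longrightarrow> j \<le> n \<Longrightarrow> L < real (j - i) \<Longrightarrow>
      prob {\<omega> \<in> space M. y < norm_incr (S \<omega>) i j} \<le> \<delta>2"
  shows "1 - \<delta>1 - (real n + 1)\<^sup>2 * \<delta>2 \<le> prob {\<omega> \<in> space M. Mn (S \<omega>) n = Mn_restr (S \<omega>) n 1 L}"
proof -
  define E where "E = {\<omega> \<in> space M. Mn (S \<omega>) n = Mn_restr (S \<omega>) n 1 L}"
  define B1 where "B1 = {\<omega> \<in> space M. \<forall>k\<in>{1..n}. X k \<omega> \<le> y}"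
  define B2 where "B2 = (\<Union>(i, j)\<in>{(i, j). i < j \<and> j \<le> n \<and> L < real (j - i)}.
      {\<omega> \<in> space M. y < norm_incr (S \<omega>) i j})"
  have [measurable]: "X k \<in> borel_measurable M" if "k \<in> {1..n}" for k
    using that random_variable_X by simp
  have "E \<in> events" "B1 \<in> events"
    unfolding E_def B1_def by measurable
  moreover have "B2 \<in> events"
    unfolding B2_def by (rule sets.finite_UN[OF finite_windows]) (clarsimp simp: sets_norm_incr_gt)
  ultimately have events: "E \<in> events" "B1 \<in> events" "B2 \<in> events" by auto
  have "space M - E \<subseteq> B1 \<union> B2"
  proof
    fix \<omega> assume \<omega>: "\<omega> \<in> space M - E"
    show "\<omega> \<in> B1 \<union> B2"
    proof (rule ccontr)
      assume "\<omega> \<notin> B1 \<union> B2"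
      then obtain k where k: "k \<in> {1..n}" "y < X k \<omega>"
        using \<omega> by (auto simp: B1_def not_le)
      have long_small: "norm_incr (S \<omega>) i j \<le> y" if "i < j" "j \<le> n" "L < real (j - i)" for i j
      proof -
        have "\<omega> \<notin> {\<omega> \<in> space M. y < norm_incr (S \<omega>) i j}"
          using \<open>\<omega> \<notin> B1 \<union> B2\<close> that unfolding B2_def by blast
        then show ?thesis using \<omega> by simp
      qed
      have "S \<omega> k - S \<omega> (k - 1) = X k \<omega>"
        using k by (subst psum_diff) auto
      then have "Mn (S \<omega>) n = Mn_restr (S \<omega>) n 1 L"
        using Mn_eq_Mn_restr_if_step_dominates[OF \<open>1 \<le> L\<close> k(1) _ long_small] k(2) by simp
      then show False using \<omega> by (simp add: E_def)
    qed
  qed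
  then have "prob (space M - E) \<le> prob B1 + prob B2"
    using events by (meson finite_measure_mono measure_Un_le sets.Un order_trans)
  also have "\<dots> \<le> \<delta>1 + (real n + 1)\<^sup>2 * \<delta>2"
    using no_big_step prob_some_long_window_gt_le[OF \<open>0 \<le> \<delta>2\<close> long] unfolding B1_def B2_def
    by (intro add_mono) auto
  finally show ?thesis
    using prob_compl[OF events(1)] by (simp add: E_def)
qed

lemma eventually_prob_Mn_eq_Mn_restr_ge:
  assumes "0 < K" "0 < t1"
    and int: "\<And>t. 0 \<le> t \<Longrightarrow> t \<le> t1 \<Longrightarrow> integrable M (\<lambda>\<omega>. exp (t * X 1 \<omega>))"
    and mgf: "\<And>t. 0 \<le> t \<Longrightarrow> t \<le> t1 \<Longrightarrow> expectation (\<lambda>\<omega>. exp (t * X 1 \<omega>)) \<le> exp (K * t\<^sup>2)"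
    and "\<alpha> < 2" "0 < a"
    and tail: "\<forall>\<^sub>F x in at_top. exp (- (x powr \<alpha>)) < prob {\<omega> \<in> space M. x < X 1 \<omega>}"
  shows "\<forall>\<^sub>F n in sequentially.
    1 - exp (- sqrt (real n)) - (real n + 1)\<^sup>2 * exp (- (3 * ln (real n)))
      \<le> prob {\<omega> \<in> space M. Mn (S \<omega>) n = Mn_restr (S \<omega>) n 1 (a * ln (real n))}"
proof -
  define \<gamma> where "\<gamma> = 1 / max \<alpha> 1"
  have "1 / 2 < \<gamma>" "\<alpha> * \<gamma> \<le> 1"
    using \<open>\<alpha> < 2\<close> by (auto simp: \<gamma>_def field_simps max_def)
  obtain x0 where x0: "\<And>x. x0 \<le> x \<Longrightarrow> exp (- (x powr \<alpha>)) < prob {\<omega> \<in> space M. x < X 1 \<omega>}"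
    using tail unfolding eventually_at_top_linorder by blast
  define y where "y n = (ln (real n) / 2) powr \<gamma>" for n :: nat
  have "\<forall>\<^sub>F n in sequentially. 0 < n \<and> 1 \<le> ln (real n) / 2 \<and> 1 \<le> a * ln (real n) \<and> x0 \<le> y n
      \<and> 3 * ln (real n) \<le> (y n)\<^sup>2 / (4 * K)
      \<and> 3 * ln (real n) \<le> t1 * y n * sqrt (a * ln (real n)) / 2"
    unfolding y_def using \<open>1 / 2 < \<gamma>\<close> \<open>0 < K\<close> \<open>0 < t1\<close> \<open>0 < a\<close>
    by (intro eventually_conj; real_asymp)
  then show ?thesis
  proof eventually_elim
    case (elim n)
    then have "0 \<le> y n" by (simp add: y_def)
    show ?case
    proof (rule prob_Mn_eq_Mn_restr_ge)
      have "exp (- (ln (real n) / 2)) \<le> exp (- (y n powr \<alpha>))"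
        using powr_powr_le_self[of "ln (real n) / 2" \<alpha> \<gamma>] elim \<open>\<alpha> * \<gamma> \<le> 1\<close> by (simp add: y_def)
      also have "\<dots> < prob {\<omega> \<in> space M. y n < X 1 \<omega>}"
        using x0 elim by simp
      finally have "real n * exp (- (ln (real n) / 2)) \<le> real n * prob {\<omega> \<in> space M. y n < X 1 \<omega>}"
        by (intro mult_left_mono) auto
      then have "sqrt (real n) \<le> real n * prob {\<omega> \<in> space M. y n < X 1 \<omega>}"
        using mult_exp_neg_half_ln[of "real n"] elim by simp
      then show "prob {\<omega> \<in> space M. \<forall>k\<in>{1..n}. X k \<omega> \<le> y n} \<le> exp (- sqrt (real n))"
        using prob_all_X_le_le_exp[of n "y n"] by (meson exp_le_cancel_iff neg_le_iff_le order_trans)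
    next
      fix i j assume ij: "i < j" "j \<le> n" "a * ln (real n) < real (j - i)"
      have "t1 * y n * sqrt (a * ln (real n)) \<le> t1 * y n * sqrt (real (j - i))"
        using ij \<open>0 \<le> y n\<close> \<open>0 < t1\<close> by (intro mult_left_mono) auto
      then have "3 * ln (real n) \<le> min ((y n)\<^sup>2 / (4 * K)) (t1 * y n * sqrt (real (j - i)) / 2)"
        using elim by linarith
      then show "prob {\<omega> \<in> space M. y n < norm_incr (S \<omega>) i j} \<le> exp (- (3 * ln (real n)))"
        using prob_norm_incr_gt_le[OF \<open>0 < K\<close> \<open>0 < t1\<close> int mgf \<open>i < j\<close> \<open>0 \<le> y n\<close>]
        by (meson exp_le_cancel_iff neg_le_iff_le order_trans)
    qed (use elim in auto)
  qed
qed

end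

theorem theorem1p6:
  fixes M :: "'a measure" and X :: "nat \<Rightarrow> 'a \<Rightarrow> real"
    and t0 \<alpha> a :: real
  assumes "prob_space M"
    and meas: "\<And>i. i \<ge> 1 \<Longrightarrow> X i \<in> borel_measurable M"
    and indep: "prob_space.indep_vars M (\<lambda>_. borel) X {1..}"
    and ident: "\<And>i. i \<ge> 1 \<Longrightarrow> distr M borel (X i) = distr M borel (X 1)"
    and int1: "integrable M (X 1)"
    and mean: "prob_space.expectation M (X 1) = 0"
    and int2: "integrable M (\<lambda>\<omega>. (X 1 \<omega>)\<^sup>2)"
    and var: "prob_space.variance M (X 1) = 1"
    and t0: "t0 > 0"
    and mgf: "\<And>t. 0 \<le> t \<Longrightarrow> t < t0 \<Longrightarrow> integrable M (\<lambda>\<omega>. exp (t * X 1 \<omega>))"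
    and alpha: "\<alpha> < 2"
    and tail: "\<forall>\<^sub>F x in at_top. measure M {\<omega> \<in> space M. X 1 \<omega> > x} > exp (- (x powr \<alpha>))"
    and a: "a > 0"
  shows "(\<lambda>n. measure M {\<omega> \<in> space M.
            Mn (psum (\<lambda>k. X k \<omega>)) n = Mn_restr (psum (\<lambda>k. X k \<omega>)) n 1 (a * ln (real n))})
         \<longlonglongrightarrow> 1"
proof -
  interpret iid_sequence M X
    by (rule iid_sequence.intro[OF assms(1) iid_sequence_axioms.intro[OF meas indep ident]])
  obtain K t1 where "0 < K" "0 < t1" "t1 < t0"
    and mgf_bound: "\<And>t. 0 \<le> t \<Longrightarrow> t \<le> t1 \<Longrightarrow> expectation (\<lambda>\<omega>. exp (t * X 1 \<omega>)) \<le> exp (K * t\<^sup>2)"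
    using mgf_le_exp_square[OF int1 mean int2 t0 mgf] by blast
  have int_exp: "integrable M (\<lambda>\<omega>. exp (t * X 1 \<omega>))" if "0 \<le> t" "t \<le> t1" for t
    using mgf that \<open>t1 < t0\<close> by simp
  have lower: "\<forall>\<^sub>F n in sequentially.
      1 - exp (- sqrt (real n)) - (real n + 1)\<^sup>2 * exp (- (3 * ln (real n)))
        \<le> prob {\<omega> \<in> space M. Mn (S \<omega>) n = Mn_restr (S \<omega>) n 1 (a * ln (real n))}"
    using int_exp mgf_bound by (intro eventually_prob_Mn_eq_Mn_restr_ge[OF \<open>0 < K\<close> \<open>0 < t1\<close> _ _ alpha a tail])
  have upper: "\<forall>\<^sub>F n in sequentially.
      prob {\<omega> \<in> space M. Mn (S \<omega>) n = Mn_restr (S \<omega>) n 1 (a * ln (real n))} \<le> 1"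
    by simp
  show ?thesis
    by (rule tendsto_sandwich[OF lower upper _ tendsto_const]) real_asymp
qed

end
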